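(* Assume $0<a,b<1$, $r>2$, $s>2$, $r>as$, $s>br$, and let $\alpha\in(\tilde\alpha,1)$, $\beta\in(\tilde\beta,1)$. (a) $T_{\alpha,\beta}$ maps $D_{\alpha,\beta}$ into $D_{\alpha,\beta}$, and for every $h\in(0,\min\{\underline c_1(\alpha,\beta),\underline c_2(\alpha,\beta)\})$ it maps $D_{\alpha,\beta}(h)$ into $D_{\alpha,\beta}(h)$. (b) If $1>\tilde\alpha_1\ge\tilde\alpha_2>\tilde\alpha$ and $1>\tilde\beta_1\ge\tilde\beta_2>\tilde\beta$, then $T_{\tilde\alpha_1,\tilde\beta_1}$ maps $D_{\tilde\alpha_2,\tilde\beta_2}$ into $D_{\tilde\alpha_2,\tilde\beta_2}$, and maps $D_{\tilde\alpha_2,\tilde\beta_2}(h)$ into $D_{\tilde\alpha_2,\tilde\beta_2}(h)$ for every $h\in(0,\min\{\underline c_1(\tilde\alpha_2,\tilde\beta_2),\underline c_2(\tilde\alpha_2,\tilde\beta_2)\})$.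
   Context: Let $f(\alpha,x,y)=x[(1-\alpha)e^{r-x-ay}+\alpha]$, $g(\beta,x,y)=y[(1-\beta)e^{s-bx-y}+\beta]$, $T_{\alpha,\beta}(x,y)=(f(\alpha,x,y),g(\beta,x,y))$. Define $\mathcal H_1(\alpha)=\max\{(1-\alpha)e^{r-1}+2\alpha,\,r\}$, $\mathcal H_2(\beta)=\max\{(1-\beta)e^{s-1}+2\beta,\,s\}$, $c_1(\beta)=r-a\mathcal H_2(\beta)$, $c_2(\alpha)=s-b\mathcal H_1(\alpha)$, $\tilde\alpha=\max\{\frac{e^{r-1}-s/b}{e^{r-1}-2},0\}$, $\tilde\beta=\max\{\frac{e^{s-1}-r/a}{e^{s-1}-2},0\}$. For $\alpha\in(\tilde\alpha,1)$, $\beta\in(\tilde\beta,1)$: $\underline c_1(\alpha,\beta)=\min\{f(\alpha,x,y):x\in[c_1(\beta),\mathcal H_1(\alpha)],y\in[0,\mathcal H_2(\beta)]\}$, $\underline c_2(\alpha,\beta)=\min\{g(\beta,x,y):x\in[0,\mathcal H_1(\alpha)],y\in[c_2(\alpha),\mathcal H_2(\beta)]\}$ (both are positive), $D_{\alpha,\beta}=[\underline c_1(\alpha,\beta),\mathcal H_1(\alpha)]\times[\underline c_2(\alpha,\beta),\mathcal H_2(\beta)]$ and, for $h\in(0,\min\{\underline c_1(\alpha,\beta),\underline c_2(\alpha,\beta)\})$, $D_{\alpha,\beta}(h)=[\underline c_1(\alpha,\beta)-h,\mathcal H_1(\alpha)]\times[\underline c_2(\alpha,\beta)-h,\mathcal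 H_2(\beta)]$. *)

theory Defs
  imports "HOL-Analysis.Analysis"
begin

definition f_map :: "real \<Rightarrow> real \<Rightarrow> real \<Rightarrow> real \<Rightarrow> real \<Rightarrow> real" where
  "f_map r a \<alpha> x y = x * ((1 - \<alpha>) * exp (r - x - a * y) + \<alpha>)"

definition g_map :: "real \<Rightarrow> real \<Rightarrow> real \<Rightarrow> real \<Rightarrow> real \<Rightarrow> real" where
  "g_map s b \<beta> x y = y * ((1 - \<beta>) * exp (s - b * x - y) + \<beta>)"

definition T_map :: "real \<Rightarrow> real \<Rightarrow> real \<Rightarrow> real \<Rightarrow> real \<Rightarrow> real \<Rightarrow>
    real \<times> real \<Rightarrow> real \<times> real" where
  "T_map r s a b \<alpha> \<beta> p = (f_map r a \<alpha> (fst p) (snd p), g_map s b \<beta> (fst p) (snd p))"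

definition H1 :: "real \<Rightarrow> real \<Rightarrow> real" where
  "H1 r \<alpha> = max ((1 - \<alpha>) * exp (r - 1) + 2 * \<alpha>) r"

definition H2 :: "real \<Rightarrow> real \<Rightarrow> real" where
  "H2 s \<beta> = max ((1 - \<beta>) * exp (s - 1) + 2 * \<beta>) s"

definition c1 :: "real \<Rightarrow> real \<Rightarrow> real \<Rightarrow> real \<Rightarrow> real" where
  "c1 r s a \<beta> = r - a * H2 s \<beta>"

definition c2 :: "real \<Rightarrow> real \<Rightarrow> real \<Rightarrow> real \<Rightarrow> real" where
  "c2 r s b \<alpha> = s - b * H1 r \<alpha>"

definition alpha_tilde :: "real \<Rightarrow> real \<Rightarrow> real \<Rightarrow> real" where
  "alpha_tilde r s b = max ((exp (r - 1) - s / b) / (exp (r - 1) - 2)) 0"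

definition beta_tilde :: "real \<Rightarrow> real \<Rightarrow> real \<Rightarrow> real" where
  "beta_tilde r s a = max ((exp (s - 1) - r / a) / (exp (s - 1) - 2)) 0"

text \<open>Minima of continuous functions over compact rectangles, written as infima
  (which are attained).\<close>

definition c1_low :: "real \<Rightarrow> real \<Rightarrow> real \<Rightarrow> real \<Rightarrow> real \<Rightarrow> real \<Rightarrow> real" where
  "c1_low r s a b \<alpha> \<beta> =
     Inf ((\<lambda>(x, y). f_map r a \<alpha> x y) ` ({c1 r s a \<beta> .. H1 r \<alpha>} \<times> {0 .. H2 s \<beta>}))"

definition c2_low :: "real \<Rightarrow> real \<Rightarrow> real \<Rightarrow> real \<Rightarrow> real \<Rightarrow> real \<Rightarrow> real" where
  "c2_low r s a b \<alpha> \<beta> =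
     Inf ((\<lambda>(x, y). g_map s b \<beta> x y) ` ({0 .. H1 r \<alpha>} \<times> {c2 r s b \<alpha> .. H2 s \<beta>}))"

definition D_set :: "real \<Rightarrow> real \<Rightarrow> real \<Rightarrow> real \<Rightarrow> real \<Rightarrow> real \<Rightarrow> (real \<times> real) set" where
  "D_set r s a b \<alpha> \<beta> = {c1_low r s a b \<alpha> \<beta> .. H1 r \<alpha>} \<times> {c2_low r s a b \<alpha> \<beta> .. H2 s \<beta>}"

definition D_h :: "real \<Rightarrow> real \<Rightarrow> real \<Rightarrow> real \<Rightarrow> real \<Rightarrow> real \<Rightarrow> real \<Rightarrow> (real \<times> real) set" where
  "D_h r s a b \<alpha> \<beta> h =
     {c1_low r s a b \<alpha> \<beta> - h .. H1 r \<alpha>} \<times> {c2_low r s a b \<alpha> \<beta> - h .. H2 s \<beta>}"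

end

theory Submission
  imports Defs
begin

text \<open>With \<open>E = exp (r - x - a y)\<close> the first coordinate \<open>f = (1 - \<alpha>) x E + \<alpha> x\<close> is affine in
  \<open>\<alpha>\<close>, so for \<open>\<alpha>2 \<le> \<alpha> \<le> 1\<close> the value \<open>f(\<alpha>)\<close> lies between \<open>f(\<alpha>2)\<close> and \<open>x\<close>.
  From above, \<open>f(\<alpha>2)\<close> is dominated by the one-species map \<open>x ((1 - \<alpha>2) exp (r - x) + \<alpha>2)\<close>,
  which maps \<open>[0, H1 \<alpha>2]\<close> into itself: use \<open>x exp (r - x) \<le> exp (r - 1)\<close> for \<open>x \<le> 2\<close>,
  \<open>exp (r - x) \<le> 1\<close> for \<open>x \<ge> r\<close>, and convexity on \<open>[2, r]\<close> in between.
  From below, either \<open>x \<ge> c1 \<beta>2\<close> and \<open>f(\<alpha>2)\<close> is at least the minimum \<open>c1_low\<close>, or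
  \<open>E \<ge> 1\<close> and \<open>f(\<alpha>2) \<ge> x\<close>. The second coordinate is the first one with the species exchanged;
  the conditions \<open>\<alpha> > alpha_tilde\<close>, \<open>\<beta> > beta_tilde\<close> serve only to make \<open>c1\<close>, \<open>c2\<close> and hence
  \<open>c1_low\<close>, \<open>c2_low\<close> positive.\<close>

lemma mult_exp_diff_le: "(x::real) * exp (r - x) \<le> exp (r - 1)"
proof -
  have "x \<le> exp (x - 1)" using exp_ge_add_one_self[of "x - 1"] by simp
  then have "x * exp (r - x) \<le> exp (x - 1) * exp (r - x)" by (simp add: mult_right_mono)
  also have "\<dots> = exp (r - 1)" by (simp flip: exp_add)
  finally show ?thesis .
qed

lemma one_species_map_convex:
  fixes \<alpha> r :: real
  assumes "\<alpha> \<le> 1"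
  shows "convex_on {2..} (\<lambda>x. x * ((1 - \<alpha>) * exp (r - x) + \<alpha>))"
proof (rule f''_ge0_imp_convex)
  show "DERIV (\<lambda>x. x * ((1 - \<alpha>) * exp (r - x) + \<alpha>)) x :> (1 - \<alpha>) * (1 - x) * exp (r - x) + \<alpha>"
    for x
    by (rule derivative_eq_intros refl | simp add: algebra_simps)+
  show "DERIV (\<lambda>x. (1 - \<alpha>) * (1 - x) * exp (r - x) + \<alpha>) x :> (1 - \<alpha>) * (x - 2) * exp (r - x)"
    for x
    by (rule derivative_eq_intros refl | simp add: algebra_simps)+
  show "0 \<le> (1 - \<alpha>) * (x - 2) * exp (r - x)" if "x \<in> {2..}" for x
    using assms that by simp
qed simp

lemma one_species_map_le_H1:
  fixes \<alpha> r x :: real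
  assumes "0 \<le> \<alpha>" "\<alpha> \<le> 1" "0 \<le> x" "x \<le> H1 r \<alpha>"
  shows "x * ((1 - \<alpha>) * exp (r - x) + \<alpha>) \<le> H1 r \<alpha>"
proof -
  define \<psi> where "\<psi> x = x * ((1 - \<alpha>) * exp (r - x) + \<alpha>)" for x
  have small: "\<psi> x \<le> H1 r \<alpha>" if "x \<le> 2" for x
  proof -
    have "(1 - \<alpha>) * (x * exp (r - x)) \<le> (1 - \<alpha>) * exp (r - 1)"
      using mult_exp_diff_le[of x r] assms(2) by (simp add: mult_left_mono)
    moreover have "\<alpha> * x \<le> \<alpha> * 2" using that assms(1) by (simp add: mult_left_mono)
    ultimately show ?thesis by (simp add: \<psi>_def H1_def algebra_simps)
  qed
  consider "x \<le> 2" | "2 \<le> x" "x \<le> r" | "r \<le> x" by linarith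
  then show ?thesis
  proof cases
    case 2
    have "\<psi> x \<le> max (\<psi> 2) (\<psi> r)"
      using convex_on_subset[OF one_species_map_convex[OF assms(2)], of "{2..r}" r] 2
      by (intro convex_on_le_max) (auto simp: \<psi>_def)
    also have "\<dots> \<le> H1 r \<alpha>" using small[of 2] by (simp add: \<psi>_def H1_def algebra_simps)
    finally show ?thesis by (simp add: \<psi>_def)
  next
    case 3
    then have "(1 - \<alpha>) * exp (r - x) + \<alpha> \<le> 1"
      using assms(2) mult_left_le[of "exp (r - x)" "1 - \<alpha>"] by simp
    then show ?thesis using mult_left_le[of _ x] assms(3,4) by fastforce
  qed (use small in \<open>simp add: \<psi>_def\<close>)
qed

lemma f_map_le_H1:
  assumes "0 \<le> a" "0 \<le> y" "0 \<le> \<alpha>" "\<alpha> \<le> 1" "0 \<le> x" "x \<le> H1 r \<alpha>"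
  shows "f_map r a \<alpha> x y \<le> H1 r \<alpha>"
proof -
  have "exp (r - x - a * y) \<le> exp (r - x)" using assms(1,2) by simp
  then have "f_map r a \<alpha> x y \<le> x * ((1 - \<alpha>) * exp (r - x) + \<alpha>)"
    unfolding f_map_def using assms(4,5) by (intro mult_left_mono add_right_mono) auto
  also have "\<dots> \<le> H1 r \<alpha>" using one_species_map_le_H1 assms(3-6) .
  finally show ?thesis .
qed

lemma f_map_between_alpha:
  assumes "\<alpha>2 \<le> \<alpha>" "\<alpha> \<le> 1"
  shows "min (f_map r a \<alpha>2 x y) x \<le> f_map r a \<alpha> x y \<and> f_map r a \<alpha> x y \<le> max (f_map r a \<alpha>2 x y) x"
proof -
  define R where "R = x * exp (r - x - a * y)"
  have f: "f_map r a \<beta> x y = (1 - \<beta>) * R + \<beta> * x" for \<beta>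
    by (simp add: f_map_def R_def algebra_simps)
  have step: "f_map r a \<alpha> x y - f_map r a \<alpha>2 x y = (\<alpha> - \<alpha>2) * (x - R)"
    and rest: "x - f_map r a \<alpha> x y = (1 - \<alpha>) * (x - R)"
    by (simp_all add: f algebra_simps)
  have "0 \<le> \<alpha> - \<alpha>2" "0 \<le> 1 - \<alpha>" using assms by simp_all
  then have "0 \<le> f_map r a \<alpha> x y - f_map r a \<alpha>2 x y \<and> 0 \<le> x - f_map r a \<alpha> x y \<or>
             f_map r a \<alpha> x y - f_map r a \<alpha>2 x y \<le> 0 \<and> x - f_map r a \<alpha> x y \<le> 0"
    unfolding step rest by (cases "R \<le> x") (simp_all add: mult_nonneg_nonpos)
  then show ?thesis by linarith
qed

lemma self_le_f_map:
  assumes "0 \<le> x" "\<alpha> \<le> 1" "x + a * y \<le> r"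
  shows "x \<le> f_map r a \<alpha> x y"
proof -
  have "1 \<le> (1 - \<alpha>) * exp (r - x - a * y) + \<alpha>"
    using assms(2,3) mult_left_mono[of 1 "exp (r - x - a * y)" "1 - \<alpha>"] by simp
  then show ?thesis unfolding f_map_def using mult_left_mono[OF _ assms(1)] by fastforce
qed

lemma g_map_eq_f_map_swap: "g_map s b \<beta> x y = f_map s b \<beta> y x"
  by (simp add: g_map_def f_map_def algebra_simps)

lemma H2_eq_H1: "H2 = H1"
  by (intro ext) (simp add: H1_def H2_def)

lemma c2_eq_c1_swap: "c2 r s b \<alpha> = c1 s r b \<alpha>"
  by (simp add: c1_def c2_def H2_eq_H1)

lemma beta_tilde_eq_alpha_tilde_swap: "beta_tilde r s a = alpha_tilde s r a"
  by (simp add: alpha_tilde_def beta_tilde_def)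

lemma c2_low_eq_c1_low_swap: "c2_low r s a b \<alpha> \<beta> = c1_low s r b a \<beta> \<alpha>"
proof -
  have "(\<lambda>(x, y). g_map s b \<beta> x y) ` (A \<times> B) = (\<lambda>(y, x). f_map s b \<beta> y x) ` (B \<times> A)"
    for A B :: "real set"
    by (force simp: g_map_eq_f_map_swap)
  then show ?thesis by (simp add: c1_low_def c2_low_def c2_eq_c1_swap H2_eq_H1)
qed

lemma tilde_nonneg: "0 \<le> alpha_tilde r s b" "0 \<le> beta_tilde r s a"
  by (simp_all add: alpha_tilde_def beta_tilde_def)

lemma H1_nonneg: "0 \<le> \<alpha> \<Longrightarrow> \<alpha> \<le> 1 \<Longrightarrow> 0 \<le> H1 r \<alpha>"
  unfolding H1_def by (intro max.coboundedI1 add_nonneg_nonneg) auto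

lemma c1_pos:
  assumes "0 < a" "2 < s" "a * s < r" "beta_tilde r s a < \<beta>"
  shows "0 < c1 r s a \<beta>"
proof -
  have e: "2 < exp (s - 1)" using exp_ge_add_one_self[of "s - 1"] assms(2) by simp
  have "(exp (s - 1) - r / a) / (exp (s - 1) - 2) < \<beta>" using assms(4) by (simp add: beta_tilde_def)
  then have "(1 - \<beta>) * exp (s - 1) + 2 * \<beta> < r / a" using e by (simp add: divide_less_eq algebra_simps)
  moreover have "s < r / a" using assms(1,3) by (simp add: less_divide_eq mult.commute)
  ultimately have "H2 s \<beta> < r / a" by (simp add: H2_def)
  then show ?thesis using assms(1) by (simp add: c1_def less_divide_eq mult.commute)
qed

lemma c1_low_le_f_map:
  assumes "c1 r s a \<beta> \<le> x" "x \<le> H1 r \<alpha>" "0 \<le> y" "y \<le> H2 s \<beta>"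
  shows "c1_low r s a b \<alpha> \<beta> \<le> f_map r a \<alpha> x y"
proof -
  let ?box = "{c1 r s a \<beta> .. H1 r \<alpha>} \<times> {0 .. H2 s \<beta>}"
  have "continuous_on ?box (\<lambda>(x, y). f_map r a \<alpha> x y)"
    unfolding f_map_def case_prod_beta by (intro continuous_intros)
  then have "bdd_below ((\<lambda>(x, y). f_map r a \<alpha> x y) ` ?box)"
    by (intro bounded_imp_bdd_below compact_imp_bounded compact_continuous_image compact_Times) auto
  then show ?thesis
    unfolding c1_low_def using assms by (intro cInf_lower) (auto intro!: image_eqI[of _ _ "(x, y)"])
qed

lemma c1_low_pos:
  assumes "0 < \<alpha>" "\<alpha> \<le> 1" "0 \<le> a" "0 \<le> \<beta>" "\<beta> \<le> 1" "0 < c1 r s a \<beta>"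
  shows "0 < c1_low r s a b \<alpha> \<beta>"
proof -
  have f_lower: "\<alpha> * c1 r s a \<beta> \<le> f_map r a \<alpha> x y" if "c1 r s a \<beta> \<le> x" for x y
  proof -
    have "\<alpha> \<le> (1 - \<alpha>) * exp (r - x - a * y) + \<alpha>" using assms(2) by simp
    then have "x * \<alpha> \<le> f_map r a \<alpha> x y"
      unfolding f_map_def using that assms(6) by (intro mult_left_mono) auto
    moreover have "\<alpha> * c1 r s a \<beta> \<le> \<alpha> * x" using that assms(1) by simp
    ultimately show ?thesis by (simp add: mult.commute)
  qed
  have "0 \<le> H2 s \<beta>" using assms(4,5) H1_nonneg by (simp add: H2_eq_H1)
  moreover have "c1 r s a \<beta> \<le> H1 r \<alpha>"
    using \<open>0 \<le> H2 s \<beta>\<close> assms(3) unfolding c1_def H1_def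
    by (intro max.coboundedI2) (simp add: mult_nonneg_nonneg)
  ultimately have "\<alpha> * c1 r s a \<beta> \<le> c1_low r s a b \<alpha> \<beta>"
    unfolding c1_low_def by (intro cInf_greatest) (auto intro: f_lower)
  moreover have "0 < \<alpha> * c1 r s a \<beta>" using assms(1,6) by simp
  ultimately show ?thesis by linarith
qed

lemma f_map_mem_interval:
  assumes "0 \<le> a" "0 \<le> \<alpha>2" "\<alpha>2 \<le> \<alpha>" "\<alpha> \<le> 1"
    and "0 \<le> L" "L \<le> c1_low r s a b \<alpha>2 \<beta>2"
    and "L \<le> x" "x \<le> H1 r \<alpha>2" "0 \<le> y" "y \<le> H2 s \<beta>2"
  shows "f_map r a \<alpha> x y \<in> {L .. H1 r \<alpha>2}"
proof -
  have x: "0 \<le> x" using assms(5,7) by linarith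
  have "f_map r a \<alpha>2 x y \<le> H1 r \<alpha>2"
    using f_map_le_H1[OF assms(1,9,2) _ x assms(8)] assms(3,4) by linarith
  moreover have "L \<le> f_map r a \<alpha>2 x y"
  proof (cases "c1 r s a \<beta>2 \<le> x")
    case True
    then show ?thesis using c1_low_le_f_map[OF True assms(8-10), of b] assms(6) by linarith
  next
    case False
    moreover have "a * y \<le> a * H2 s \<beta>2" using assms(10,1) by (rule mult_left_mono)
    ultimately have "x + a * y \<le> r" by (simp add: c1_def)
    then have "x \<le> f_map r a \<alpha>2 x y" using self_le_f_map x assms(3,4) by simp
    then show ?thesis using assms(7) by linarith
  qed
  ultimately show ?thesis
    using f_map_between_alpha[OF assms(3,4), of r a x y] assms(7,8) by auto
qed

lemma T_map_rectangle_invariant: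
  assumes "0 \<le> a" "0 \<le> b"
    and "0 \<le> \<alpha>2" "\<alpha>2 \<le> \<alpha>" "\<alpha> \<le> 1" "0 \<le> \<beta>2" "\<beta>2 \<le> \<beta>" "\<beta> \<le> 1"
    and "0 \<le> L1" "L1 \<le> c1_low r s a b \<alpha>2 \<beta>2" "0 \<le> L2" "L2 \<le> c2_low r s a b \<alpha>2 \<beta>2"
  shows "T_map r s a b \<alpha> \<beta> ` ({L1 .. H1 r \<alpha>2} \<times> {L2 .. H2 s \<beta>2})
           \<subseteq> {L1 .. H1 r \<alpha>2} \<times> {L2 .. H2 s \<beta>2}"
proof
  fix p assume "p \<in> T_map r s a b \<alpha> \<beta> ` ({L1 .. H1 r \<alpha>2} \<times> {L2 .. H2 s \<beta>2})"
  then obtain x y where p: "p = T_map r s a b \<alpha> \<beta> (x, y)"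
    and "L1 \<le> x" "x \<le> H1 r \<alpha>2" "L2 \<le> y" "y \<le> H2 s \<beta>2"
    by auto
  moreover note f_map_mem_interval[of a \<alpha>2 \<alpha> L1 r s b \<beta>2 x y]
    f_map_mem_interval[of b \<beta>2 \<beta> L2 s r a \<alpha>2 y x]
  ultimately show "p \<in> {L1 .. H1 r \<alpha>2} \<times> {L2 .. H2 s \<beta>2}"
    using assms by (simp add: T_map_def g_map_eq_f_map_swap c2_low_eq_c1_low_swap H2_eq_H1)
qed

lemma c1_low_c2_low_pos:
  assumes "0 < a" "0 < b" "2 < r" "2 < s" "a * s < r" "b * r < s"
    and "alpha_tilde r s b < \<alpha>" "\<alpha> \<le> 1" "beta_tilde r s a < \<beta>" "\<beta> \<le> 1"
  shows "0 < c1_low r s a b \<alpha> \<beta>" "0 < c2_low r s a b \<alpha> \<beta>"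
proof -
  have "0 < c1 r s a \<beta>" "0 < c1 s r b \<alpha>"
    using c1_pos[of a s r] c1_pos[of b r s] assms
    by (simp_all add: beta_tilde_eq_alpha_tilde_swap)
  then show "0 < c1_low r s a b \<alpha> \<beta>" "0 < c2_low r s a b \<alpha> \<beta>"
    using c1_low_pos tilde_nonneg(1)[of r s b] tilde_nonneg(2)[of r s a] assms
    by (simp_all add: c2_low_eq_c1_low_swap)
qed

lemma T_map_D_invariant:
  assumes "0 < a" "0 < b" "2 < r" "2 < s" "a * s < r" "b * r < s"
    and "alpha_tilde r s b < \<alpha>2" "\<alpha>2 \<le> \<alpha>" "\<alpha> < 1"
    and "beta_tilde r s a < \<beta>2" "\<beta>2 \<le> \<beta>" "\<beta> < 1"
  shows "T_map r s a b \<alpha> \<beta> ` D_set r s a b \<alpha>2 \<beta>2 \<subseteq> D_set r s a b \<alpha>2 \<beta>2 \<and>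
         (\<forall>h. 0 < h \<and> h < min (c1_low r s a b \<alpha>2 \<beta>2) (c2_low r s a b \<alpha>2 \<beta>2) \<longrightarrow>
           T_map r s a b \<alpha> \<beta> ` D_h r s a b \<alpha>2 \<beta>2 h \<subseteq> D_h r s a b \<alpha>2 \<beta>2 h)"
proof -
  have bounds: "0 \<le> a" "0 \<le> b" "0 \<le> \<alpha>2" "\<alpha>2 \<le> \<alpha>" "\<alpha> \<le> 1" "0 \<le> \<beta>2" "\<beta>2 \<le> \<beta>" "\<beta> \<le> 1"
    using assms tilde_nonneg(1)[of r s b] tilde_nonneg(2)[of r s a] by simp_all
  have pos: "0 < c1_low r s a b \<alpha>2 \<beta>2" "0 < c2_low r s a b \<alpha>2 \<beta>2"
    using c1_low_c2_low_pos[of a b r s \<alpha>2 \<beta>2] assms by simp_all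
  show ?thesis
    unfolding D_set_def D_h_def
    using T_map_rectangle_invariant[OF bounds] pos by simp
qed

theorem mainTheorem3:
  fixes r s a b :: real
  assumes "0 < a" "a < 1" "0 < b" "b < 1" "r > 2" "s > 2" "r > a * s" "s > b * r"
  shows
   "(\<forall>\<alpha> \<beta>. alpha_tilde r s b < \<alpha> \<and> \<alpha> < 1 \<and> beta_tilde r s a < \<beta> \<and> \<beta> < 1 \<longrightarrow>
        T_map r s a b \<alpha> \<beta> ` D_set r s a b \<alpha> \<beta> \<subseteq> D_set r s a b \<alpha> \<beta> \<and>
        (\<forall>h. 0 < h \<and> h < min (c1_low r s a b \<alpha> \<beta>) (c2_low r s a b \<alpha> \<beta>) \<longrightarrow>
           T_map r s a b \<alpha> \<beta> ` D_h r s a b \<alpha> \<beta> h \<subseteq> D_h r s a b \<alpha> \<beta> h))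
    \<and>
    (\<forall>\<alpha>1 \<alpha>2 \<beta>1 \<beta>2. 1 > \<alpha>1 \<and> \<alpha>1 \<ge> \<alpha>2 \<and> \<alpha>2 > alpha_tilde r s b \<and>
                      1 > \<beta>1 \<and> \<beta>1 \<ge> \<beta>2 \<and> \<beta>2 > beta_tilde r s a \<longrightarrow>
        T_map r s a b \<alpha>1 \<beta>1 ` D_set r s a b \<alpha>2 \<beta>2 \<subseteq> D_set r s a b \<alpha>2 \<beta>2 \<and>
        (\<forall>h. 0 < h \<and> h < min (c1_low r s a b \<alpha>2 \<beta>2) (c2_low r s a b \<alpha>2 \<beta>2) \<longrightarrow>
           T_map r s a b \<alpha>1 \<beta>1 ` D_h r s a b \<alpha>2 \<beta>2 h \<subseteq> D_h r s a b \<alpha>2 \<beta>2 h))"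
  using T_map_D_invariant[OF assms(1,3,5,6)] assms(7,8) by (meson order_refl)

end
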